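(* Let $X$ be a finite connected rack with $n$ elements, identified with $[n]=\{1,\dots,n\}$ via a fixed bijection, and let $\mathcal{M}$ be the set of maximal (proper) subracks of $X$. Then every $S\in\mathsf{Inf}(\mathcal{R}(X))$ satisfies $\eta(S)=S$, i.e. $\mathsf{Inf}(\mathcal{R}(X))\subseteq\eta(\mathcal{R}(X))$; consequently $\pi$ restricts to an isomorphism of posets between $\mathsf{Inf}(\mathcal{R}(X))$ and $\pi(\mathsf{Inf}(\mathcal{R}(X)))\subseteq\Pi_n$. Moreover, $\mathsf{Inf}(\mathcal{R}(X))$ is isomorphic to a subposet of $\mathsf{Inf}(\Pi_n,\pi(\mathcal{M}))$.
   Context: A rack is a set $X$ with a binary operation $\triangleright$ such that $a\triangleright(b\triangleright c)=(a\triangleright b)\triangleright(a\triangleright c)$ for all $a,b,c$, and each map $\phi_a\colon x\mapsto a\triangleright x$ is a bijection of $X$. Subracks are subsets closed under $\triangleright$ (including $\emptyset$); $\mathcal{R}(X)$ is the lattice of subracks ordered by inclusion, and $\overline{\mathcal{R}(X)}=\mathcal{R}(X)\setminus\{X,\emptyset\}$. $\mathsf{Inn}(X)=\langle\phi_a: a\in X\rangle$; $X$ is connected if $\mathsf{Inn}(X)$ acts transitively on $X$. For a subrack $S$, its orbit structure $\pi(S)$ is the partition of $X$ into the orbits of the group $\langle\phi_a: a\in S\rangle$; $\eta(S)$ is the largest subrack of $X$ having the same orbit structure as $S$. $\Pi_n$ is the lattice of set partitions of $[n]$ ordered by refinement. For a finite lattice $\mathcal{L}$ with proper part $\overline{\mathcal{L}}$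 (maximum and minimum removed) and $\mathcal{S}\subseteq\overline{\mathcal{L}}$, $\mathsf{Inf}(\mathcal{L},\mathcal{S})$ is the subposet of $\overline{\mathcal{L}}$ consisting of elements that are meets of sets of elements of $\mathcal{S}$; $\mathsf{Inf}(\mathcal{L})=\mathsf{Inf}(\mathcal{L},\text{coatoms of }\mathcal{L})$. *)

theory Defs
  imports Main
begin

text \<open>A rack: carrier X with operation op (op a b = a \<triangleright> b).\<close>
definition rack :: "'a set \<Rightarrow> ('a \<Rightarrow> 'a \<Rightarrow> 'a) \<Rightarrow> bool" where
  "rack X op \<longleftrightarrow>
     (\<forall>a\<in>X. \<forall>b\<in>X. op a b \<in> X) \<and>
     (\<forall>a\<in>X. \<forall>b\<in>X. \<forall>c\<in>X. op a (op b c) = op (op a b) (op a c)) \<and>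
     (\<forall>a\<in>X. bij_betw (op a) X X)"

text \<open>Subracks (including the empty one); the lattice R(X).\<close>
definition subracks :: "'a set \<Rightarrow> ('a \<Rightarrow> 'a \<Rightarrow> 'a) \<Rightarrow> 'a set set" where
  "subracks X op = {S. S \<subseteq> X \<and> (\<forall>a\<in>S. \<forall>b\<in>S. op a b \<in> S)}"

text \<open>Orbit of x under the group generated by the maps phi_a, a in S
  (closure under the generators and their inverses).\<close>
inductive_set orbit :: "'a set \<Rightarrow> ('a \<Rightarrow> 'a \<Rightarrow> 'a) \<Rightarrow> 'a set \<Rightarrow> 'a \<Rightarrow> 'a set"
  for X op S x where
  base: "x \<in> X \<Longrightarrow> x \<in> orbit X op S x"
| fwd: "y \<in> orbit X op S x \<Longrightarrow> a \<in> S \<Longrightarrow> op a y \<in> orbit X op S x"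
| bwd: "y \<in> orbit X op S x \<Longrightarrow> a \<in> S \<Longrightarrow> inv_into X (op a) y \<in> orbit X op S x"

text \<open>Connected: Inn(X) acts transitively on X.\<close>
definition rack_connected :: "'a set \<Rightarrow> ('a \<Rightarrow> 'a \<Rightarrow> 'a) \<Rightarrow> bool" where
  "rack_connected X op \<longleftrightarrow> (\<forall>x\<in>X. orbit X op X x = X)"

definition orbit_structure :: "'a set \<Rightarrow> ('a \<Rightarrow> 'a \<Rightarrow> 'a) \<Rightarrow> 'a set \<Rightarrow> 'a set set" where
  "orbit_structure X op S = (\<lambda>x. orbit X op S x) ` X"

definition eta :: "'a set \<Rightarrow> ('a \<Rightarrow> 'a \<Rightarrow> 'a) \<Rightarrow> 'a set \<Rightarrow> 'a set" where
  "eta X op S = (THE T. T \<in> subracks X op \<and> orbit_structure X op T = orbit_structure X op S \<and>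
      (\<forall>T'\<in>subracks X op. orbit_structure X op T' = orbit_structure X op S \<longrightarrow> T' \<subseteq> T))"

definition maximal_subracks :: "'a set \<Rightarrow> ('a \<Rightarrow> 'a \<Rightarrow> 'a) \<Rightarrow> 'a set set" where
  "maximal_subracks X op = {M \<in> subracks X op. M \<noteq> X \<and>
      (\<forall>T\<in>subracks X op. M \<subseteq> T \<longrightarrow> T = M \<or> T = X)}"

text \<open>Inf(R(X)): elements of the proper part of R(X) that are meets (intersections,
  the meet of the empty family being X) of sets of coatoms.\<close>
definition Inf_R :: "'a set \<Rightarrow> ('a \<Rightarrow> 'a \<Rightarrow> 'a) \<Rightarrow> 'a set set" where
  "Inf_R X op = {T \<in> subracks X op. T \<noteq> X \<and> T \<noteq> {} \<and>
      (\<exists>F\<subseteq>maximal_subracks X op. T = X \<inter> \<Inter>F)}"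

definition partitions :: "nat \<Rightarrow> nat set set set" where
  "partitions n = {P. (\<forall>B\<in>P. B \<noteq> {}) \<and> \<Union>P = {1..n} \<and>
      (\<forall>B\<in>P. \<forall>C\<in>P. B \<noteq> C \<longrightarrow> B \<inter> C = {})}"

definition refines :: "nat set set \<Rightarrow> nat set set \<Rightarrow> bool" where
  "refines P Q \<longleftrightarrow> (\<forall>B\<in>P. \<exists>C\<in>Q. B \<subseteq> C)"

definition part_meet :: "nat \<Rightarrow> nat set set set \<Rightarrow> nat set set" where
  "part_meet n F = (\<lambda>x. {y\<in>{1..n}. \<forall>P\<in>F. \<forall>B\<in>P. x \<in> B \<longleftrightarrow> y \<in> B}) ` {1..n}"

definition part_top :: "nat \<Rightarrow> nat set set" where
  "part_top n = {{1..n}}"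

definition part_bot :: "nat \<Rightarrow> nat set set" where
  "part_bot n = (\<lambda>i. {i}) ` {1..n}"

definition Inf_Pi :: "nat \<Rightarrow> nat set set set \<Rightarrow> nat set set set" where
  "Inf_Pi n S = {P \<in> partitions n. P \<noteq> part_top n \<and> P \<noteq> part_bot n \<and>
      (\<exists>F\<subseteq>S. P = part_meet n F)}"

definition pi_n :: "('a \<Rightarrow> nat) \<Rightarrow> 'a set \<Rightarrow> ('a \<Rightarrow> 'a \<Rightarrow> 'a) \<Rightarrow> 'a set \<Rightarrow> nat set set" where
  "pi_n f X op S = (\<lambda>B. f ` B) ` orbit_structure X op S"

end

theory Submission
  imports Defs
begin

text \<open>If an element x of X moves every point y only inside its M-orbit, where M is a nonempty
maximal subrack of the finite connected rack X, then x \<in> M: the set of all such elements is a subrack containing M, and it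
cannot be X, because then the M-orbits would be the Inn(X)-orbits, i.e. X, while the M-orbit of a
point of M stays in M. Every S in Inf(R(X)) is an intersection of maximal subracks containing it,
so S is exactly the set of elements preserving the S-orbits. Hence S is recovered from \<pi>(S)
(giving \<eta>(S) = S and the order embedding S \<mapsto> \<pi>(S)), and also from the meet of the partitions
\<pi>(M) over the maximal M \<supseteq> S, which is the embedding into Inf(\<Pi>_n, \<pi>(M)).\<close>

lemma refines_refl: "refines P P"
  unfolding refines_def by blast

lemma inj_on_if_refines_embedding:
  assumes "\<forall>S\<in>A. \<forall>T\<in>A. S \<subseteq> T \<longleftrightarrow> refines (g S) (g T)"
  shows "inj_on g A"
proof (rule inj_onI)
  fix S T assume "S \<in> A" "T \<in> A" "g S = g T"
  then show "S = T" using assms refines_refl by (metis subset_antisym)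
qed

subsection \<open>Meets in the partition lattice\<close>

definition same_blocks :: "nat set set set \<Rightarrow> nat \<Rightarrow> nat \<Rightarrow> bool" where
  "same_blocks G i j \<longleftrightarrow> (\<forall>P\<in>G. \<forall>B\<in>P. i \<in> B \<longleftrightarrow> j \<in> B)"

lemma part_meet_same_blocks: "part_meet n G = (\<lambda>i. {j\<in>{1..n}. same_blocks G i j}) ` {1..n}"
  unfolding part_meet_def same_blocks_def by simp

lemma same_blocks_refl: "same_blocks G i i"
  and same_blocks_sym: "same_blocks G i j \<Longrightarrow> same_blocks G j i"
  and same_blocks_trans: "same_blocks G i j \<Longrightarrow> same_blocks G j k \<Longrightarrow> same_blocks G i k"
  unfolding same_blocks_def by blast+

lemma part_meet_in_partitions: "part_meet n G \<in> partitions n"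
  unfolding partitions_def part_meet_same_blocks
proof (intro CollectI conjI ballI impI)
  fix B C assume "B \<in> (\<lambda>i. {j\<in>{1..n}. same_blocks G i j}) ` {1..n}"
    and "C \<in> (\<lambda>i. {j\<in>{1..n}. same_blocks G i j}) ` {1..n}" and "B \<noteq> C"
  then obtain i i' where B: "B = {j\<in>{1..n}. same_blocks G i j}"
    and C: "C = {j\<in>{1..n}. same_blocks G i' j}" by blast
  show "B \<inter> C = {}"
  proof (rule ccontr)
    assume "B \<inter> C \<noteq> {}"
    then obtain k where "same_blocks G i k" "same_blocks G i' k" using B C by blast
    then have "same_blocks G i j \<longleftrightarrow> same_blocks G i' j" for j
      by (metis same_blocks_sym same_blocks_trans)
    then show False using B C \<open>B \<noteq> C\<close> by simp
  qed
qed (use same_blocks_refl in blast)+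

lemma refines_part_meet_iff:
  "refines (part_meet n G) (part_meet n H) \<longleftrightarrow>
     (\<forall>i\<in>{1..n}. \<forall>j\<in>{1..n}. same_blocks G i j \<longrightarrow> same_blocks H i j)"
proof
  assume refines: "refines (part_meet n G) (part_meet n H)"
  show "\<forall>i\<in>{1..n}. \<forall>j\<in>{1..n}. same_blocks G i j \<longrightarrow> same_blocks H i j"
  proof (intro ballI impI)
    fix i j assume i: "i \<in> {1..n}" and j: "j \<in> {1..n}" and ij: "same_blocks G i j"
    have "{j\<in>{1..n}. same_blocks G i j} \<in> part_meet n G"
      unfolding part_meet_same_blocks using i by blast
    then obtain C where C: "C \<in> part_meet n H" "{j\<in>{1..n}. same_blocks G i j} \<subseteq> C"
      using refines unfolding refines_def by blast
    obtain k where k: "C = {j\<in>{1..n}. same_blocks H k j}"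
      using C(1) unfolding part_meet_same_blocks by blast
    have "i \<in> C" "j \<in> C" using C(2) i j ij same_blocks_refl by blast+
    then have "same_blocks H k i" "same_blocks H k j" using k by simp_all
    then show "same_blocks H i j" using same_blocks_sym same_blocks_trans by metis
  qed
next
  assume coarser: "\<forall>i\<in>{1..n}. \<forall>j\<in>{1..n}. same_blocks G i j \<longrightarrow> same_blocks H i j"
  show "refines (part_meet n G) (part_meet n H)"
    unfolding refines_def
  proof
    fix B assume "B \<in> part_meet n G"
    then obtain i where i: "i \<in> {1..n}" and B: "B = {j\<in>{1..n}. same_blocks G i j}"
      unfolding part_meet_same_blocks by blast
    have "{j\<in>{1..n}. same_blocks H i j} \<in> part_meet n H"
      unfolding part_meet_same_blocks using i by blast
    moreover have "B \<subseteq> {j\<in>{1..n}. same_blocks H i j}" using B i coarser by blast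
    ultimately show "\<exists>C\<in>part_meet n H. B \<subseteq> C" by blast
  qed
qed

lemma part_meet_eq_top_same_blocks:
  assumes "part_meet n G = part_top n" "i \<in> {1..n}" "j \<in> {1..n}"
  shows "same_blocks G i j"
proof -
  have "{k\<in>{1..n}. same_blocks G i k} \<in> part_meet n G"
    unfolding part_meet_same_blocks using assms(2) by blast
  then show ?thesis using assms unfolding part_top_def by auto
qed

lemma part_meet_eq_bot_same_blocks:
  assumes "part_meet n G = part_bot n" "i \<in> {1..n}" "j \<in> {1..n}" "same_blocks G i j"
  shows "i = j"
proof -
  have "{k\<in>{1..n}. same_blocks G i k} \<in> part_meet n G"
    unfolding part_meet_same_blocks using assms(2) by blast
  then obtain k where "{l\<in>{1..n}. same_blocks G i l} = {k}"
    using assms(1) unfolding part_bot_def by blast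
  then have "i \<in> {k}" "j \<in> {k}" using assms(2-4) same_blocks_refl by blast+
  then show ?thesis by simp
qed

subsection \<open>Orbits\<close>

lemma orbit_trans:
  assumes "y \<in> orbit X op S x" and "z \<in> orbit X op S y"
  shows "z \<in> orbit X op S x"
  using assms(2)
proof induction
  case base
  show ?case using assms(1) by simp
next
  case (fwd z a)
  show ?case using fwd.IH fwd.hyps(2) by (rule orbit.fwd)
next
  case (bwd z a)
  show ?case using bwd.IH bwd.hyps(2) by (rule orbit.bwd)
qed

lemma orbit_mono:
  assumes "S \<subseteq> T" and "y \<in> orbit X op S x"
  shows "y \<in> orbit X op T x"
  using assms(2)
proof induction
  case base
  then show ?case by (rule orbit.base)
next
  case (fwd y a)
  show ?case using fwd.IH subsetD[OF assms(1) fwd.hyps(2)] by (rule orbit.fwd)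
next
  case (bwd y a)
  show ?case using bwd.IH subsetD[OF assms(1) bwd.hyps(2)] by (rule orbit.bwd)
qed

lemma op_mem_orbit:
  assumes "a \<in> S" and "y \<in> X"
  shows "op a y \<in> orbit X op S y"
  using orbit.base[OF assms(2)] assms(1) by (rule orbit.fwd)

definition orbit_preservers :: "'a set \<Rightarrow> ('a \<Rightarrow> 'a \<Rightarrow> 'a) \<Rightarrow> 'a set \<Rightarrow> 'a set" where
  "orbit_preservers X op S = {x\<in>X. \<forall>y\<in>X. op x y \<in> orbit X op S y}"

lemma subset_orbit_preservers:
  assumes "S \<subseteq> X"
  shows "S \<subseteq> orbit_preservers X op S"
proof
  fix a assume "a \<in> S"
  then have "a \<in> X" "\<forall>y\<in>X. op a y \<in> orbit X op S y" using assms op_mem_orbit by auto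
  then show "a \<in> orbit_preservers X op S" unfolding orbit_preservers_def by simp
qed

lemma orbit_preservers_mono:
  assumes "\<And>y. y \<in> X \<Longrightarrow> orbit X op S y \<subseteq> orbit X op T y"
  shows "orbit_preservers X op S \<subseteq> orbit_preservers X op T"
  using assms unfolding orbit_preservers_def by auto

locale rack_on =
  fixes X :: "'a set" and op :: "'a \<Rightarrow> 'a \<Rightarrow> 'a"
  assumes rack: "rack X op"
begin

lemma op_closed: "a \<in> X \<Longrightarrow> b \<in> X \<Longrightarrow> op a b \<in> X"
  using rack unfolding rack_def by blast

lemma op_self_distrib: "a \<in> X \<Longrightarrow> b \<in> X \<Longrightarrow> c \<in> X \<Longrightarrow> op a (op b c) = op (op a b) (op a c)"
  using rack unfolding rack_def by blast

lemma bij_betw_op: "a \<in> X \<Longrightarrow> bij_betw (op a) X X"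
  using rack unfolding rack_def by blast

lemma inj_on_op: "a \<in> X \<Longrightarrow> inj_on (op a) X"
  using bij_betw_op bij_betw_imp_inj_on by blast

lemma inv_op_mem: "a \<in> X \<Longrightarrow> y \<in> X \<Longrightarrow> inv_into X (op a) y \<in> X"
  using bij_betw_op by (metis bij_betw_def inv_into_into)

lemma op_inv_op: "a \<in> X \<Longrightarrow> y \<in> X \<Longrightarrow> op a (inv_into X (op a) y) = y"
  using bij_betw_op by (metis bij_betw_def f_inv_into_f)

lemma inv_op_op: "a \<in> X \<Longrightarrow> y \<in> X \<Longrightarrow> inv_into X (op a) (op a y) = y"
  using inj_on_op by (metis inv_into_f_f)

lemma orbit_subset:
  assumes "S \<subseteq> X"
  shows "orbit X op S x \<subseteq> X"
proof
  fix y assume "y \<in> orbit X op S x"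
  then show "y \<in> X" by induction (use assms in \<open>auto intro: op_closed inv_op_mem\<close>)
qed

lemma orbit_sym:
  assumes S: "S \<subseteq> X" and "y \<in> orbit X op S x"
  shows "x \<in> orbit X op S y"
  using assms(2)
proof (induction y rule: orbit.induct)
  case base
  then show ?case by (rule orbit.base)
next
  case (fwd y a)
  have a: "a \<in> X" and y: "y \<in> X" using fwd S orbit_subset by blast+
  have "inv_into X (op a) (op a y) \<in> orbit X op S (op a y)"
    using orbit.base[OF op_closed[OF a y]] fwd.hyps(2) by (rule orbit.bwd)
  then have "y \<in> orbit X op S (op a y)" using inv_op_op[OF a y] by simp
  then show ?case using fwd.IH by (rule orbit_trans)
next
  case (bwd y a)
  have a: "a \<in> X" and y: "y \<in> X" using bwd S orbit_subset by blast+
  have "op a (inv_into X (op a) y) \<in> orbit X op S (inv_into X (op a) y)"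
    using bwd.hyps(2) inv_op_mem[OF a y] by (rule op_mem_orbit)
  then have "y \<in> orbit X op S (inv_into X (op a) y)" using op_inv_op[OF a y] by simp
  then show ?case using bwd.IH by (rule orbit_trans)
qed

lemma orbit_eq:
  assumes "S \<subseteq> X" and "y \<in> orbit X op S x"
  shows "orbit X op S y = orbit X op S x"
  using orbit_trans[OF assms(2)] orbit_trans[OF orbit_sym[OF assms]] by blast

lemma orbit_subset_subrack:
  assumes fin: "finite X" and S: "S \<in> subracks X op" and "s \<in> S"
  shows "orbit X op S s \<subseteq> S"
proof
  fix y assume "y \<in> orbit X op S s"
  then show "y \<in> S"
  proof (induction y rule: orbit.induct)
    case base
    show ?case using \<open>s \<in> S\<close> by simp
  next
    case (fwd y a)
    then show ?case using S unfolding subracks_def by blast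
  next
    case (bwd y a)
    have SX: "S \<subseteq> X" and a: "a \<in> X" and into: "op a ` S \<subseteq> S"
      using S bwd.hyps(2) unfolding subracks_def by auto
    \<comment> \<open>by finiteness, the injective map op a of S into itself is onto S\<close>
    have "op a ` S = S"
      using finite_subset[OF SX fin] into inj_on_subset[OF inj_on_op[OF a] SX] by (rule endo_inj_surj)
    then obtain w where "w \<in> S" "y = op a w" using bwd.IH by blast
    then show ?case using inv_op_op a SX by auto
  qed
qed

lemma orbit_preservers_subrack:
  assumes S: "S \<subseteq> X"
  shows "orbit_preservers X op S \<in> subracks X op"
  unfolding subracks_def
proof (intro CollectI conjI ballI)
  show "orbit_preservers X op S \<subseteq> X" unfolding orbit_preservers_def by blast
next
  fix u v assume u: "u \<in> orbit_preservers X op S" and v: "v \<in> orbit_preservers X op S"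
  then have uX: "u \<in> X" and vX: "v \<in> X" unfolding orbit_preservers_def by auto
  have "op (op u v) y \<in> orbit X op S y" if y: "y \<in> X" for y
  proof -
    define w where "w = inv_into X (op u) y"
    have wX: "w \<in> X" and y_eq: "y = op u w" using inv_op_mem op_inv_op uX y unfolding w_def by auto
    have "op (op u v) y = op u (op v w)" using op_self_distrib uX vX wX y_eq by simp
    moreover have "op u (op v w) \<in> orbit X op S (op v w)"
      using u op_closed[OF vX wX] unfolding orbit_preservers_def by blast
    moreover have "orbit X op S (op v w) = orbit X op S w"
      using v wX S orbit_eq unfolding orbit_preservers_def by blast
    moreover have "orbit X op S y = orbit X op S w"
      using u wX S orbit_eq y_eq unfolding orbit_preservers_def by blast
    ultimately show ?thesis by simp
  qed
  then show "op u v \<in> orbit_preservers X op S"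
    using op_closed[OF uX vX] unfolding orbit_preservers_def by blast
qed

lemma orbit_orbit_preservers:
  assumes S: "S \<subseteq> X"
  shows "orbit X op (orbit_preservers X op S) x \<subseteq> orbit X op S x"
proof
  fix z assume "z \<in> orbit X op (orbit_preservers X op S) x"
  then show "z \<in> orbit X op S x"
  proof induction
    case base
    then show ?case by (rule orbit.base)
  next
    case (fwd z a)
    have "z \<in> X" using orbit_subset[OF S] fwd.IH by (rule subsetD)
    then have "op a z \<in> orbit X op S z" using fwd.hyps(2) unfolding orbit_preservers_def by simp
    with fwd.IH show ?case by (rule orbit_trans)
  next
    case (bwd z a)
    define w where "w = inv_into X (op a) z"
    have a: "a \<in> X" and preserves: "\<forall>y\<in>X. op a y \<in> orbit X op S y"
      using bwd.hyps(2) unfolding orbit_preservers_def by auto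
    have "z \<in> X" using orbit_subset[OF S] bwd.IH by (rule subsetD)
    then have "w \<in> X" "op a w = z" using inv_op_mem[OF a] op_inv_op[OF a] unfolding w_def by auto
    then have "z \<in> orbit X op S w" using preserves by auto
    then have "w \<in> orbit X op S z" by (rule orbit_sym[OF S])
    with bwd.IH show ?case unfolding w_def by (rule orbit_trans)
  qed
qed

lemma orbit_eq_if_orbit_structure_eq:
  assumes "orbit_structure X op T = orbit_structure X op S" and "S \<subseteq> X" and "y \<in> X"
  shows "orbit X op T y = orbit X op S y"
proof -
  obtain z where z: "orbit X op T y = orbit X op S z"
    using assms(1,3) unfolding orbit_structure_def by blast
  moreover have "y \<in> orbit X op T y" using assms(3) by (rule orbit.base)
  ultimately show ?thesis using orbit_eq[OF assms(2)] by simp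
qed

lemma eta_eqI:
  assumes S: "S \<in> subracks X op" and preservers: "orbit_preservers X op S \<subseteq> S"
  shows "eta X op S = S"
proof -
  have largest: "T \<subseteq> S"
    if "T \<in> subracks X op" and "orbit_structure X op T = orbit_structure X op S" for T
  proof -
    have T: "T \<subseteq> X" and S: "S \<subseteq> X" using that(1) S unfolding subracks_def by auto
    from T have "T \<subseteq> orbit_preservers X op T" by (rule subset_orbit_preservers)
    also have "\<dots> \<subseteq> orbit_preservers X op S"
      using orbit_eq_if_orbit_structure_eq[OF that(2) S] by (intro orbit_preservers_mono) simp
    finally show ?thesis using preservers by blast
  qed
  show ?thesis
    unfolding eta_def by (rule the_equality) (use S largest in auto)
qed

lemma pi_n_eq: "pi_n f X op S = (\<lambda>x. f ` orbit X op S x) ` X"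
  unfolding pi_n_def orbit_structure_def by (simp add: image_image)

lemma image_orbit_mem_iff:
  assumes "inj_on f X" and "S \<subseteq> X" and "y \<in> X"
  shows "f y \<in> f ` orbit X op S x \<longleftrightarrow> y \<in> orbit X op S x"
  using assms(1,3) orbit_subset[OF assms(2)] by (rule inj_on_image_mem_iff)

lemma pi_n_in_partitions:
  assumes S: "S \<subseteq> X" and f: "bij_betw f X {1..n}"
  shows "pi_n f X op S \<in> partitions n"
  unfolding partitions_def pi_n_eq
proof (intro CollectI conjI ballI impI)
  fix B assume "B \<in> (\<lambda>x. f ` orbit X op S x) ` X"
  then obtain x where "x \<in> X" "B = f ` orbit X op S x" by blast
  then show "B \<noteq> {}" using orbit.base[of x X op S] by blast
next
  have "(\<Union>x\<in>X. orbit X op S x) = X"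
  proof
    show "(\<Union>x\<in>X. orbit X op S x) \<subseteq> X" using orbit_subset[OF S] by (rule UN_least)
    show "X \<subseteq> (\<Union>x\<in>X. orbit X op S x)"
    proof
      fix x assume "x \<in> X"
      then show "x \<in> (\<Union>x\<in>X. orbit X op S x)" using orbit.base[OF \<open>x \<in> X\<close>] by (rule UN_I)
    qed
  qed
  then show "\<Union>((\<lambda>x. f ` orbit X op S x) ` X) = {1..n}"
    using bij_betw_imp_surj_on[OF f] by (simp add: image_UN[symmetric])
next
  fix B C assume "B \<in> (\<lambda>x. f ` orbit X op S x) ` X" "C \<in> (\<lambda>x. f ` orbit X op S x) ` X" "B \<noteq> C"
  then obtain y z where B: "B = f ` orbit X op S y" and C: "C = f ` orbit X op S z"
    and distinct: "orbit X op S y \<noteq> orbit X op S z" by blast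
  show "B \<inter> C = {}"
  proof (rule ccontr)
    assume "B \<inter> C \<noteq> {}"
    then obtain u where u: "u \<in> orbit X op S y" and "f u \<in> C" using B by blast
    have "u \<in> X" using orbit_subset[OF S] u by (rule subsetD)
    then have "u \<in> orbit X op S z"
      using \<open>f u \<in> C\<close> image_orbit_mem_iff[OF bij_betw_imp_inj_on[OF f] S] unfolding C by blast
    then show False using distinct orbit_eq[OF S u] orbit_eq[OF S] by metis
  qed
qed

lemma refines_pi_n_iff:
  assumes f: "inj_on f X" and S: "S \<subseteq> X" and T: "T \<subseteq> X"
  shows "refines (pi_n f X op S) (pi_n f X op T) \<longleftrightarrow> (\<forall>y\<in>X. orbit X op S y \<subseteq> orbit X op T y)"
proof
  assume refines: "refines (pi_n f X op S) (pi_n f X op T)"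
  show "\<forall>y\<in>X. orbit X op S y \<subseteq> orbit X op T y"
  proof
    fix y assume y: "y \<in> X"
    then obtain z where image_sub: "f ` orbit X op S y \<subseteq> f ` orbit X op T z"
      using refines unfolding refines_def pi_n_eq by blast
    have sub: "orbit X op S y \<subseteq> orbit X op T z"
    proof
      fix u assume u: "u \<in> orbit X op S y"
      have "u \<in> X" using orbit_subset[OF S] u by (rule subsetD)
      moreover have "f u \<in> f ` orbit X op T z" using image_sub u by blast
      ultimately show "u \<in> orbit X op T z" using image_orbit_mem_iff[OF f T] by blast
    qed
    then have "y \<in> orbit X op T z" using orbit.base[OF y] by (rule subsetD)
    then have "orbit X op T y = orbit X op T z" by (rule orbit_eq[OF T])
    then show "orbit X op S y \<subseteq> orbit X op T y" using sub by simp
  qed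
next
  assume finer: "\<forall>y\<in>X. orbit X op S y \<subseteq> orbit X op T y"
  show "refines (pi_n f X op S) (pi_n f X op T)"
    unfolding refines_def pi_n_eq
  proof
    fix B assume "B \<in> (\<lambda>x. f ` orbit X op S x) ` X"
    then obtain y where y: "y \<in> X" and B: "B = f ` orbit X op S y" by blast
    have "B \<subseteq> f ` orbit X op T y" unfolding B using finer y by (intro image_mono) blast
    with y show "\<exists>C\<in>(\<lambda>x. f ` orbit X op T x) ` X. B \<subseteq> C" by blast
  qed
qed

lemma same_blocks_pi_n_iff:
  assumes f: "inj_on f X" and F: "\<forall>M\<in>F. M \<subseteq> X" and x: "x \<in> X" and y: "y \<in> X"
  shows "same_blocks (pi_n f X op ` F) (f x) (f y) \<longleftrightarrow> (\<forall>M\<in>F. y \<in> orbit X op M x)"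
proof -
  have same_orbit: "(\<forall>z\<in>X. x \<in> orbit X op M z \<longleftrightarrow> y \<in> orbit X op M z) \<longleftrightarrow> y \<in> orbit X op M x"
    if M: "M \<subseteq> X" for M
  proof
    assume "\<forall>z\<in>X. x \<in> orbit X op M z \<longleftrightarrow> y \<in> orbit X op M z"
    then show "y \<in> orbit X op M x" using orbit.base[OF x] x by blast
  next
    assume xy: "y \<in> orbit X op M x"
    show "\<forall>z\<in>X. x \<in> orbit X op M z \<longleftrightarrow> y \<in> orbit X op M z"
      using orbit_trans[OF _ xy] orbit_trans[OF _ orbit_sym[OF M xy]] by blast
  qed
  have "same_blocks (pi_n f X op ` F) (f x) (f y) \<longleftrightarrow>
      (\<forall>M\<in>F. \<forall>z\<in>X. x \<in> orbit X op M z \<longleftrightarrow> y \<in> orbit X op M z)"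
    using F image_orbit_mem_iff[OF f _ x] image_orbit_mem_iff[OF f _ y]
    unfolding same_blocks_def pi_n_eq by auto
  then show ?thesis using same_orbit F by simp
qed

lemma refines_part_meet_pi_n_iff:
  assumes f: "bij_betw f X {1..n}" and F: "\<forall>M\<in>F. M \<subseteq> X" and G: "\<forall>M\<in>G. M \<subseteq> X"
  shows "refines (part_meet n (pi_n f X op ` F)) (part_meet n (pi_n f X op ` G)) \<longleftrightarrow>
    (\<forall>x\<in>X. \<forall>y\<in>X. (\<forall>M\<in>F. y \<in> orbit X op M x) \<longrightarrow> (\<forall>M\<in>G. y \<in> orbit X op M x))"
proof -
  have "{1..n} = f ` X" using f by (simp add: bij_betw_def)
  then show ?thesis
    using same_blocks_pi_n_iff[OF bij_betw_imp_inj_on[OF f] F] same_blocks_pi_n_iff[OF bij_betw_imp_inj_on[OF f] G]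
    by (simp add: refines_part_meet_iff)
qed

lemma same_blocks_coatoms_iff:
  assumes f: "inj_on f X" and x: "x \<in> X" and y: "y \<in> X"
  shows "same_blocks (pi_n f X op ` {M\<in>maximal_subracks X op. S \<subseteq> M}) (f x) (f y) \<longleftrightarrow>
    (\<forall>M\<in>maximal_subracks X op. S \<subseteq> M \<longrightarrow> y \<in> orbit X op M x)"
proof -
  have "\<forall>M\<in>{M\<in>maximal_subracks X op. S \<subseteq> M}. M \<subseteq> X"
    unfolding maximal_subracks_def subracks_def by blast
  then show ?thesis using same_blocks_pi_n_iff[OF f _ x y] by auto
qed

end

lemma Inf_R_subset: "S \<in> Inf_R X op \<Longrightarrow> S \<subseteq> X"
  unfolding Inf_R_def subracks_def by blast

lemma maximal_subrack_subset: "M \<in> maximal_subracks X op \<Longrightarrow> M \<subseteq> X"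
  unfolding maximal_subracks_def subracks_def by blast

lemma Inf_R_eq_Inter_maximal_subracks:
  assumes "S \<in> Inf_R X op"
  shows "S = X \<inter> \<Inter>{M\<in>maximal_subracks X op. S \<subseteq> M}"
    and "\<exists>M\<in>maximal_subracks X op. S \<subseteq> M"
proof -
  obtain F where F: "F \<subseteq> maximal_subracks X op" "S = X \<inter> \<Inter>F" and "S \<noteq> X"
    using assms unfolding Inf_R_def by blast
  then show "S = X \<inter> \<Inter>{M\<in>maximal_subracks X op. S \<subseteq> M}" by blast
  show "\<exists>M\<in>maximal_subracks X op. S \<subseteq> M" using F \<open>S \<noteq> X\<close> by blast
qed

definition coatom_meet ::
    "nat \<Rightarrow> ('a \<Rightarrow> nat) \<Rightarrow> 'a set \<Rightarrow> ('a \<Rightarrow> 'a \<Rightarrow> 'a) \<Rightarrow> 'a set \<Rightarrow> nat set set" where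
  "coatom_meet n f X op S = part_meet n (pi_n f X op ` {M\<in>maximal_subracks X op. S \<subseteq> M})"

locale connected_rack = rack_on +
  assumes connected: "rack_connected X op"
begin

lemma orbit_carrier: "x \<in> X \<Longrightarrow> orbit X op X x = X"
  using connected unfolding rack_connected_def by blast

lemma trivially_acting_imp_singleton:
  assumes s: "s \<in> X" and trivial: "\<forall>y\<in>X. op s y = y"
  shows "X = {s}"
proof -
  define Z where "Z = {z\<in>X. \<forall>y\<in>X. op z y = y}"
  \<comment> \<open>Z is invariant under Inn(X), so by connectedness it is all of X\<close>
  have "orbit X op X s \<subseteq> Z"
  proof
    fix z assume "z \<in> orbit X op X s"
    then show "z \<in> Z"
    proof induction
      case base
      then show ?case using trivial unfolding Z_def by blast
    next
      case (fwd z a)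
      have z: "z \<in> X" "\<forall>y\<in>X. op z y = y" and a: "a \<in> X" using fwd unfolding Z_def by auto
      have "op (op a z) y = y" if "y \<in> X" for y
      proof -
        have "op (op a z) y = op (op a z) (op a (inv_into X (op a) y))" using op_inv_op a that by simp
        also have "\<dots> = op a (op z (inv_into X (op a) y))" using op_self_distrib a z(1) inv_op_mem that by simp
        also have "\<dots> = y" using z(2) inv_op_mem op_inv_op a that by simp
        finally show ?thesis .
      qed
      then show ?case using op_closed a z unfolding Z_def by blast
    next
      case (bwd z a)
      define w where "w = inv_into X (op a) z"
      have z: "z \<in> X" "\<forall>y\<in>X. op z y = y" and a: "a \<in> X" using bwd unfolding Z_def by auto
      then have w: "w \<in> X" "op a w = z" using inv_op_mem op_inv_op unfolding w_def by auto
      have "op w y = y" if "y \<in> X" for y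
      proof -
        have "op a (op w y) = op z (op a y)" using op_self_distrib a w that by simp
        also have "\<dots> = op a y" using z(2) op_closed a that by simp
        finally show ?thesis using inj_on_op[OF a] op_closed w(1) that by (meson inj_onD)
      qed
      then show ?case using w(1) unfolding Z_def w_def by blast
    qed
  qed
  then have everything_trivial: "\<forall>x\<in>X. \<forall>y\<in>X. op x y = y"
    using orbit_carrier[OF s] unfolding Z_def by blast
  have "orbit X op X s \<subseteq> {s}"
  proof
    fix z assume "z \<in> orbit X op X s"
    then show "z \<in> {s}"
      by induction (use s everything_trivial inv_op_op in auto)
  qed
  then show ?thesis using orbit_carrier[OF s] s by blast
qed

end

subsection \<open>Intersections of maximal subracks\<close>

locale finite_connected_rack = connected_rack +
  assumes finite_carrier: "finite X"
begin

lemma orbit_preservers_maximal_subrack: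
  assumes M: "M \<in> maximal_subracks X op" and "M \<noteq> {}"
  shows "orbit_preservers X op M = M"
proof -
  have Msub: "M \<in> subracks X op" and "M \<noteq> X"
    and maximal: "\<And>T. T \<in> subracks X op \<Longrightarrow> M \<subseteq> T \<Longrightarrow> T = M \<or> T = X"
    using M unfolding maximal_subracks_def by auto
  have MX: "M \<subseteq> X" using M by (rule maximal_subrack_subset)
  obtain m where m: "m \<in> M" using \<open>M \<noteq> {}\<close> by blast
  have "orbit_preservers X op M \<noteq> X"
  proof
    assume "orbit_preservers X op M = X"
    then have "X \<subseteq> orbit X op M m"
      using orbit_orbit_preservers[OF MX, of m] orbit_carrier m MX by auto
    also have "\<dots> \<subseteq> M" by (rule orbit_subset_subrack[OF finite_carrier Msub m])
    finally show False using \<open>M \<noteq> X\<close> MX by blast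
  qed
  then show ?thesis
    using maximal[OF orbit_preservers_subrack[OF MX] subset_orbit_preservers[OF MX]] by blast
qed

lemma orbit_preservers_Inf_R:
  assumes S: "S \<in> Inf_R X op"
  shows "orbit_preservers X op S = S"
proof
  have SX: "S \<subseteq> X" using S by (rule Inf_R_subset)
  then show "S \<subseteq> orbit_preservers X op S" by (rule subset_orbit_preservers)
  have "orbit_preservers X op S \<subseteq> M" if "M \<in> maximal_subracks X op" "S \<subseteq> M" for M
  proof -
    have "orbit_preservers X op S \<subseteq> orbit_preservers X op M"
      using orbit_mono[OF that(2)] by (intro orbit_preservers_mono) blast
    also have "\<dots> = M"
      using orbit_preservers_maximal_subrack that S unfolding Inf_R_def by blast
    finally show ?thesis .
  qed
  moreover have "orbit_preservers X op S \<subseteq> X" unfolding orbit_preservers_def by blast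
  ultimately show "orbit_preservers X op S \<subseteq> S"
    using Inf_R_eq_Inter_maximal_subracks(1)[OF S] by blast
qed

lemma eta_Inf_R: "S \<in> Inf_R X op \<Longrightarrow> eta X op S = S"
  using eta_eqI orbit_preservers_Inf_R unfolding Inf_R_def by auto

lemma Inf_R_subset_iff_refines_pi_n:
  assumes f: "inj_on f X" and S: "S \<in> Inf_R X op" and T: "T \<in> Inf_R X op"
  shows "S \<subseteq> T \<longleftrightarrow> refines (pi_n f X op S) (pi_n f X op T)"
proof -
  have "S \<subseteq> T \<longleftrightarrow> (\<forall>y\<in>X. orbit X op S y \<subseteq> orbit X op T y)"
  proof
    assume "\<forall>y\<in>X. orbit X op S y \<subseteq> orbit X op T y"
    then have "orbit_preservers X op S \<subseteq> orbit_preservers X op T"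
      by (intro orbit_preservers_mono) blast
    then show "S \<subseteq> T" using orbit_preservers_Inf_R S T by simp
  next
    assume "S \<subseteq> T"
    show "\<forall>y\<in>X. orbit X op S y \<subseteq> orbit X op T y" using orbit_mono[OF \<open>S \<subseteq> T\<close>] by blast
  qed
  then show ?thesis using refines_pi_n_iff[OF f Inf_R_subset[OF S] Inf_R_subset[OF T]] by simp
qed

lemma Inf_R_subset_iff_refines_coatom_meet:
  assumes f: "bij_betw f X {1..n}" and S: "S \<in> Inf_R X op" and T: "T \<in> Inf_R X op"
  shows "S \<subseteq> T \<longleftrightarrow> refines (coatom_meet n f X op S) (coatom_meet n f X op T)"
proof -
  let ?F = "\<lambda>S. {M\<in>maximal_subracks X op. S \<subseteq> M}"
  have FX: "\<forall>M\<in>?F S. M \<subseteq> X" for S using maximal_subrack_subset by blast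
  have "S \<subseteq> T \<longleftrightarrow>
      (\<forall>x\<in>X. \<forall>y\<in>X. (\<forall>M\<in>?F S. y \<in> orbit X op M x) \<longrightarrow> (\<forall>M\<in>?F T. y \<in> orbit X op M x))"
  proof
    assume coarser: "\<forall>x\<in>X. \<forall>y\<in>X.
      (\<forall>M\<in>?F S. y \<in> orbit X op M x) \<longrightarrow> (\<forall>M\<in>?F T. y \<in> orbit X op M x)"
    have "s \<in> M" if s: "s \<in> S" and M: "M \<in> ?F T" for s M
    proof -
      have sX: "s \<in> X" using s Inf_R_subset[OF S] by blast
      have "op s y \<in> orbit X op M y" if y: "y \<in> X" for y
      proof -
        have "\<forall>M'\<in>?F S. op s y \<in> orbit X op M' y" using op_mem_orbit[OF _ y] s by blast
        then show ?thesis using coarser[rule_format, OF y op_closed[OF sX y]] M by blast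
      qed
      then have "s \<in> orbit_preservers X op M" using sX unfolding orbit_preservers_def by blast
      also have "\<dots> = M" using orbit_preservers_maximal_subrack M T unfolding Inf_R_def by blast
      finally show ?thesis .
    qed
    then show "S \<subseteq> T"
      using Inf_R_eq_Inter_maximal_subracks(1)[OF T] Inf_R_subset[OF S] by blast
  qed blast
  then show ?thesis unfolding coatom_meet_def using refines_part_meet_pi_n_iff[OF f FX FX] by simp
qed

lemma coatom_meet_neq_part_top:
  assumes f: "bij_betw f X {1..n}" and S: "S \<in> Inf_R X op"
  shows "coatom_meet n f X op S \<noteq> part_top n"
proof
  assume top: "coatom_meet n f X op S = part_top n"
  obtain s where s: "s \<in> S" using S unfolding Inf_R_def by blast
  obtain M where M: "M \<in> maximal_subracks X op" "S \<subseteq> M"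
    using Inf_R_eq_Inter_maximal_subracks(2)[OF S] by blast
  have "M \<subseteq> X" "M \<noteq> X"
    using maximal_subrack_subset[OF M(1)] M(1) unfolding maximal_subracks_def by auto
  then obtain y where y: "y \<in> X" "y \<notin> M" by blast
  have sX: "s \<in> X" using s Inf_R_subset[OF S] by blast
  have "f s \<in> {1..n}" "f y \<in> {1..n}" using f sX y(1) by (auto simp: bij_betw_def)
  then have "same_blocks (pi_n f X op ` {M\<in>maximal_subracks X op. S \<subseteq> M}) (f s) (f y)"
    by (rule part_meet_eq_top_same_blocks[OF top[unfolded coatom_meet_def]])
  then have "y \<in> orbit X op M s"
    using same_blocks_coatoms_iff[OF bij_betw_imp_inj_on[OF f] sX y(1)] M by blast
  also have "\<dots> \<subseteq> M"
    using finite_carrier _ subsetD[OF M(2) s] by (rule orbit_subset_subrack)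
      (use M(1) in \<open>simp add: maximal_subracks_def\<close>)
  finally show False using y(2) by blast
qed

lemma coatom_meet_neq_part_bot:
  assumes f: "bij_betw f X {1..n}" and S: "S \<in> Inf_R X op"
  shows "coatom_meet n f X op S \<noteq> part_bot n"
proof
  assume bot: "coatom_meet n f X op S = part_bot n"
  obtain s where s: "s \<in> S" using S unfolding Inf_R_def by blast
  have sX: "s \<in> X" using s Inf_R_subset[OF S] by blast
  have "op s y = y" if y: "y \<in> X" for y
  proof -
    have sy: "op s y \<in> X" using op_closed[OF sX y] .
    have "\<forall>M\<in>maximal_subracks X op. S \<subseteq> M \<longrightarrow> op s y \<in> orbit X op M y"
      using op_mem_orbit[OF _ y] s by blast
    then have "same_blocks (pi_n f X op ` {M\<in>maximal_subracks X op. S \<subseteq> M}) (f y) (f (op s y))"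
      using same_blocks_coatoms_iff[OF bij_betw_imp_inj_on[OF f] y sy] by simp
    moreover have "f y \<in> {1..n}" "f (op s y) \<in> {1..n}" using f y sy by (auto simp: bij_betw_def)
    ultimately have "f y = f (op s y)"
      using part_meet_eq_bot_same_blocks[OF bot[unfolded coatom_meet_def]] by blast
    then show ?thesis using bij_betw_imp_inj_on[OF f] y sy by (metis inj_onD)
  qed
  with sX have "X = {s}" by (intro trivially_acting_imp_singleton) auto
  moreover have "S \<noteq> X" using S unfolding Inf_R_def by blast
  ultimately show False using s Inf_R_subset[OF S] by blast
qed

lemma coatom_meet_in_Inf_Pi:
  assumes f: "bij_betw f X {1..n}" and S: "S \<in> Inf_R X op"
  shows "coatom_meet n f X op S \<in> Inf_Pi n (pi_n f X op ` maximal_subracks X op)"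
  using coatom_meet_neq_part_top[OF f S] coatom_meet_neq_part_bot[OF f S]
  unfolding Inf_Pi_def coatom_meet_def
  by (intro CollectI conjI part_meet_in_partitions
      exI[of _ "pi_n f X op ` {M\<in>maximal_subracks X op. S \<subseteq> M}"]) auto

end

theorem mainTheorem4:
  fixes X :: "'a set" and op :: "'a \<Rightarrow> 'a \<Rightarrow> 'a" and n :: nat and f :: "'a \<Rightarrow> nat"
  assumes "finite X" and "rack X op" and "rack_connected X op"
    and "card X = n" and "bij_betw f X {1..n}"
  shows "(\<forall>S\<in>Inf_R X op. eta X op S = S)
    \<and> pi_n f X op ` Inf_R X op \<subseteq> partitions n
    \<and> bij_betw (pi_n f X op) (Inf_R X op) (pi_n f X op ` Inf_R X op)
    \<and> (\<forall>S\<in>Inf_R X op. \<forall>T\<in>Inf_R X op.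
          S \<subseteq> T \<longleftrightarrow> refines (pi_n f X op S) (pi_n f X op T))
    \<and> (\<exists>g. inj_on g (Inf_R X op)
          \<and> g ` Inf_R X op \<subseteq> Inf_Pi n (pi_n f X op ` maximal_subracks X op)
          \<and> (\<forall>S\<in>Inf_R X op. \<forall>T\<in>Inf_R X op. S \<subseteq> T \<longleftrightarrow> refines (g S) (g T)))"
proof -
  interpret finite_connected_rack X op
    using assms(1-3) by unfold_locales
  have pi_n_embedding: "\<forall>S\<in>Inf_R X op. \<forall>T\<in>Inf_R X op.
      S \<subseteq> T \<longleftrightarrow> refines (pi_n f X op S) (pi_n f X op T)"
    using Inf_R_subset_iff_refines_pi_n[OF bij_betw_imp_inj_on[OF assms(5)]] by blast
  have coatom_meet_embedding: "\<forall>S\<in>Inf_R X op. \<forall>T\<in>Inf_R X op.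
      S \<subseteq> T \<longleftrightarrow> refines (coatom_meet n f X op S) (coatom_meet n f X op T)"
    using Inf_R_subset_iff_refines_coatom_meet[OF assms(5)] by blast
  show ?thesis
  proof (intro conjI exI)
    show "\<forall>S\<in>Inf_R X op. eta X op S = S" using eta_Inf_R by blast
    show "pi_n f X op ` Inf_R X op \<subseteq> partitions n"
      using pi_n_in_partitions[OF Inf_R_subset assms(5)] by blast
    show "bij_betw (pi_n f X op) (Inf_R X op) (pi_n f X op ` Inf_R X op)"
      using inj_on_if_refines_embedding[OF pi_n_embedding] by (simp add: bij_betw_def)
    show "inj_on (coatom_meet n f X op) (Inf_R X op)"
      using coatom_meet_embedding by (rule inj_on_if_refines_embedding)
    show "coatom_meet n f X op ` Inf_R X op \<subseteq> Inf_Pi n (pi_n f X op ` maximal_subracks X op)"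
      using coatom_meet_in_Inf_Pi[OF assms(5)] by blast
  qed (fact pi_n_embedding coatom_meet_embedding)+
qed
end
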